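(* Let $A$ be an Archimedean semiprime $f$-algebra and let $A_b=\{a\in A: a^2\le\mu|a|\text{ for some }\mu\in(0,\infty)\}$. For $a\in A$, we have $a\in A_b$ if and only if $a^2\in A_b$.
   Context: An $f$-algebra is a real associative algebra that is a vector lattice with $A_+A_+\subseteq A_+$ and such that $a\wedge b=0$ implies $ac\wedge b=ca\wedge b=0$ for all $c\in A_+$; it is semiprime if $0$ is its only nilpotent element. *)

theory Defs
  imports Complex_Main
begin

text \<open>Ambient type: a real associative (not necessarily unital) algebra that is an
ordered real vector space whose order is a lattice, i.e. a vector lattice
(Riesz space).\<close>

definition vabs :: "'a::{ordered_real_vector, lattice} \<Rightarrow> 'a" where
  "vabs a = sup a (- a)"

definition f_algebra :: "'a::{real_algebra, ordered_real_vector, lattice} itself \<Rightarrow> bool" where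
  "f_algebra _ \<longleftrightarrow>
     (\<forall>a b::'a. 0 \<le> a \<longrightarrow> 0 \<le> b \<longrightarrow> 0 \<le> a * b) \<and>
     (\<forall>a b c::'a. inf a b = 0 \<longrightarrow> 0 \<le> c \<longrightarrow> inf (a * c) b = 0 \<and> inf (c * a) b = 0)"

definition archimedean_vl :: "'a::{ordered_real_vector, lattice} itself \<Rightarrow> bool" where
  "archimedean_vl _ \<longleftrightarrow>
     (\<forall>a b::'a. 0 \<le> a \<longrightarrow> (\<forall>n::nat. real n *\<^sub>R a \<le> b) \<longrightarrow> a = 0)"

text \<open>Powers in a possibly non-unital algebra: npow n a = a^(n+1).\<close>
fun npow :: "nat \<Rightarrow> 'a::semigroup_mult \<Rightarrow> 'a" where
  "npow 0 a = a"
| "npow (Suc n) a = a * npow n a"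

definition nilpotent :: "'a::{semigroup_mult, zero} \<Rightarrow> bool" where
  "nilpotent a \<longleftrightarrow> (\<exists>n. npow n a = 0)"

definition semiprime :: "'a::{real_algebra} itself \<Rightarrow> bool" where
  "semiprime _ \<longleftrightarrow> (\<forall>a::'a. nilpotent a \<longrightarrow> a = 0)"

definition bounded_part :: "'a::{real_algebra, ordered_real_vector, lattice} set" where
  "bounded_part = {a. \<exists>\<mu>::real. 0 < \<mu> \<and> a * a \<le> \<mu> *\<^sub>R vabs a}"

end

theory Submission
  imports Defs "HOL-Library.Lattice_Algebras"
begin

text \<open>Since \<open>a\<^sup>2 = |a|\<^sup>2\<close> in an f-algebra, it suffices to treat \<open>b = |a| \<ge> 0\<close>.
If \<open>b\<^sup>2 \<le> \<mu> b\<close>, multiplying by \<open>b\<^sup>2\<close> and then by \<open>b\<close> gives \<open>b\<^sup>4 \<le> \<mu>\<^sup>2 b\<^sup>2\<close>.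
Conversely, if \<open>b\<^sup>4 \<le> s\<^sup>2 b\<^sup>2\<close>, put \<open>d = b\<^sup>2 - s b\<close> and \<open>e = b\<^sup>2 + s b\<close>, so that
\<open>0 \<le> e\<close>, \<open>d \<le> e\<close> and \<open>d e \<le> 0\<close>. For \<open>p = d\<^sup>+\<close> disjointness gives \<open>p d = p\<^sup>2\<close>, hence
\<open>0 \<le> p\<^sup>2 e = p d e \<le> 0\<close>, and \<open>0 \<le> p\<^sup>3 \<le> p\<^sup>2 e = 0\<close>. Semiprimeness forces \<open>p = 0\<close>,
i.e. \<open>b\<^sup>2 \<le> s b\<close>.\<close>

interpretation vector_lattice:
  lattice_ab_group_add_abs vabs "(+)" "0::'a::{ordered_real_vector,lattice}" "(-)" uminus
    "(\<le>)" "(<)" inf sup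
  by unfold_locales (rule vabs_def)

lemma inf_pprt_minus_nprt:
  fixes a :: "'a::{ordered_real_vector,lattice}"
  shows "inf (vector_lattice.pprt a) (- vector_lattice.nprt a) = 0"
proof -
  let ?p = "vector_lattice.pprt a" and ?n = "vector_lattice.nprt a"
  have "inf ?p (- ?n) + ?n = inf (?p + ?n) (- ?n + ?n)"
    by (rule vector_lattice.add_inf_distrib_right)
  also have "\<dots> = inf a 0"
    by (simp flip: vector_lattice.prts)
  finally show ?thesis
    by (simp add: vector_lattice.nprt_def)
qed

lemma f_algebra_mult_nonneg:
  fixes x y :: "'a::{real_algebra,ordered_real_vector,lattice}"
  assumes "f_algebra TYPE('a)" and "0 \<le> x" and "0 \<le> y"
  shows "0 \<le> x * y"
  using assms unfolding f_algebra_def by blast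

lemma f_algebra_mult_left_mono:
  fixes c x y :: "'a::{real_algebra,ordered_real_vector,lattice}"
  assumes "f_algebra TYPE('a)" and "0 \<le> c" and "x \<le> y"
  shows "c * x \<le> c * y"
proof -
  have "0 \<le> c * (y - x)"
    using f_algebra_mult_nonneg[OF assms(1,2)] assms(3) by simp
  then show ?thesis by (simp add: algebra_simps)
qed

lemma f_algebra_disjoint_mult_eq_0:
  fixes x y :: "'a::{real_algebra,ordered_real_vector,lattice}"
  assumes F: "f_algebra TYPE('a)" and disj: "inf x y = 0"
  shows "x * y = 0"
proof -
  have disj_mult: "inf (u * c) v = 0 \<and> inf (c * u) v = 0"
    if "inf u v = 0" and "0 \<le> c" for u v c :: 'a
    using F that unfolding f_algebra_def by blast
  have "0 \<le> x" "0 \<le> y"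
    using disj by (metis inf.cobounded1 inf.cobounded2)+
  have "inf y (x * y) = 0"
    using disj_mult[OF disj \<open>0 \<le> y\<close>] by (simp add: inf.commute)
  from disj_mult[OF this \<open>0 \<le> x\<close>] show ?thesis by simp
qed

lemma f_algebra_pprt_mult:
  fixes d :: "'a::{real_algebra,ordered_real_vector,lattice}"
  assumes "f_algebra TYPE('a)"
  shows "vector_lattice.pprt d * d = vector_lattice.pprt d * vector_lattice.pprt d"
proof -
  let ?p = "vector_lattice.pprt d" and ?n = "vector_lattice.nprt d"
  have "?p * - ?n = 0"
    using f_algebra_disjoint_mult_eq_0[OF assms inf_pprt_minus_nprt] .
  then have "?p * d = ?p * (?p + ?n)"
    by (simp flip: vector_lattice.prts)
  also have "\<dots> = ?p * ?p"
    using \<open>?p * - ?n = 0\<close> by (simp add: distrib_left)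
  finally show ?thesis .
qed

lemma f_algebra_mult_vabs_vabs:
  fixes a :: "'a::{real_algebra,ordered_real_vector,lattice}"
  assumes F: "f_algebra TYPE('a)"
  shows "vabs a * vabs a = a * a"
proof -
  define p where "p = vector_lattice.pprt a"
  define n where "n = - vector_lattice.nprt a"
  have disjoint_parts: "p * n = 0" "n * p = 0"
    unfolding p_def n_def using f_algebra_disjoint_mult_eq_0[OF F] inf_pprt_minus_nprt
    by (metis inf.commute)+
  have a: "a = p - n" and vabs_a: "vabs a = p + n"
    unfolding p_def n_def using vector_lattice.prts[of a] vector_lattice.abs_prts[of a]
    by simp_all
  have "vabs a * vabs a = p * p + n * n"
    unfolding vabs_a using disjoint_parts by (simp add: algebra_simps)
  also have "\<dots> = a * a"
    unfolding a using disjoint_parts by (simp add: algebra_simps)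
  finally show ?thesis .
qed

lemma semiprime_cube_eq_0:
  fixes x :: "'a::real_algebra"
  assumes "semiprime TYPE('a)" and "x * (x * x) = 0"
  shows "x = 0"
proof -
  have "npow 2 x = 0"
    using assms(2) by (simp add: numeral_2_eq_2)
  then show ?thesis
    using assms(1) unfolding semiprime_def nilpotent_def by blast
qed

lemma f_algebra_semiprime_nonpos_if_mult_nonpos:
  fixes d e :: "'a::{real_algebra,ordered_real_vector,lattice}"
  assumes F: "f_algebra TYPE('a)" and S: "semiprime TYPE('a)"
    and "0 \<le> e" and "d \<le> e" and "d * e \<le> 0"
  shows "d \<le> 0"
proof -
  let ?p = "vector_lattice.pprt d"
  have "0 \<le> ?p * ?p"
    using f_algebra_mult_nonneg[OF F] by simp
  have "(?p * ?p) * e = ?p * (d * e)"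
    by (simp only: f_algebra_pprt_mult[OF F, symmetric] mult.assoc)
  also have "\<dots> \<le> 0"
    using f_algebra_mult_left_mono[OF F _ \<open>d * e \<le> 0\<close>, of ?p] by simp
  finally have "(?p * ?p) * e = 0"
    using f_algebra_mult_nonneg[OF F \<open>0 \<le> ?p * ?p\<close> \<open>0 \<le> e\<close>] by (rule order_antisym)
  moreover have "?p \<le> e"
    using assms(3,4) by (simp add: vector_lattice.pprt_def)
  ultimately have "(?p * ?p) * ?p \<le> 0"
    using f_algebra_mult_left_mono[OF F \<open>0 \<le> ?p * ?p\<close>] by metis
  moreover have "0 \<le> (?p * ?p) * ?p"
    using f_algebra_mult_nonneg[OF F \<open>0 \<le> ?p * ?p\<close>] by simp
  ultimately have "?p * (?p * ?p) = 0"
    by (simp add: mult.assoc)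
  then have "?p = 0"
    by (rule semiprime_cube_eq_0[OF S])
  then show ?thesis
    by (simp add: vector_lattice.le_zero_iff_zero_pprt)
qed

lemma f_algebra_fourth_power_le:
  fixes b :: "'a::{real_algebra,ordered_real_vector,lattice}"
  assumes F: "f_algebra TYPE('a)" and "0 \<le> b" and "0 \<le> \<mu>"
    and bound: "b * b \<le> \<mu> *\<^sub>R b"
  shows "(b * b) * (b * b) \<le> (\<mu> * \<mu>) *\<^sub>R (b * b)"
proof -
  have "0 \<le> b * b"
    using f_algebra_mult_nonneg[OF F] \<open>0 \<le> b\<close> by simp
  have "(b * b) * (b * b) \<le> (b * b) * (\<mu> *\<^sub>R b)"
    by (rule f_algebra_mult_left_mono[OF F \<open>0 \<le> b * b\<close> bound])
  also have "\<dots> = \<mu> *\<^sub>R (b * (b * b))"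
    by (simp add: mult.assoc)
  also have "\<dots> \<le> \<mu> *\<^sub>R (b * (\<mu> *\<^sub>R b))"
    using f_algebra_mult_left_mono[OF F \<open>0 \<le> b\<close> bound] \<open>0 \<le> \<mu>\<close>
    by (rule scaleR_left_mono)
  also have "\<dots> = (\<mu> * \<mu>) *\<^sub>R (b * b)"
    by simp
  finally show ?thesis .
qed

lemma f_algebra_semiprime_square_le_if_fourth_power_le:
  fixes b :: "'a::{real_algebra,ordered_real_vector,lattice}"
  assumes F: "f_algebra TYPE('a)" and S: "semiprime TYPE('a)"
    and "0 \<le> b" and "0 \<le> s"
    and bound: "(b * b) * (b * b) \<le> (s * s) *\<^sub>R (b * b)"
  shows "b * b \<le> s *\<^sub>R b"
proof -
  define d where "d = b * b - s *\<^sub>R b"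
  define e where "e = b * b + s *\<^sub>R b"
  have "0 \<le> s *\<^sub>R b" "0 \<le> b * b"
    using \<open>0 \<le> s\<close> \<open>0 \<le> b\<close> f_algebra_mult_nonneg[OF F]
    by (simp_all add: scaleR_nonneg_nonneg)
  then have "0 \<le> e" and "d \<le> b * b" and "b * b \<le> e"
    unfolding d_def e_def by simp_all
  then have "d \<le> e"
    by (metis order_trans)
  have "d * e = (b * b) * (b * b) - (s * s) *\<^sub>R (b * b)"
    unfolding d_def e_def by (simp add: algebra_simps)
  then have "d * e \<le> 0"
    using bound by simp
  with f_algebra_semiprime_nonpos_if_mult_nonpos[OF F S \<open>0 \<le> e\<close> \<open>d \<le> e\<close>]
  show ?thesis
    unfolding d_def by simp
qed

lemma bounded_part_iff_vabs:
  fixes a :: "'a::{real_algebra,ordered_real_vector,lattice}"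
  assumes "f_algebra TYPE('a)"
  shows "a \<in> bounded_part \<longleftrightarrow> vabs a \<in> bounded_part"
  unfolding bounded_part_def by (simp add: f_algebra_mult_vabs_vabs[OF assms])

lemma nonneg_in_bounded_part_iff_square:
  fixes b :: "'a::{real_algebra,ordered_real_vector,lattice}"
  assumes F: "f_algebra TYPE('a)" and S: "semiprime TYPE('a)" and "0 \<le> b"
  shows "b \<in> bounded_part \<longleftrightarrow> b * b \<in> bounded_part"
proof
  have "vabs b = b" "vabs (b * b) = b * b"
    using f_algebra_mult_nonneg[OF F] \<open>0 \<le> b\<close> by simp_all
  note unfold_bounded_part = bounded_part_def mem_Collect_eq this
  show "b * b \<in> bounded_part" if bounded: "b \<in> bounded_part"
  proof -
    obtain \<mu> :: real where "0 < \<mu>" and "b * b \<le> \<mu> *\<^sub>R b"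
      using bounded unfolding unfold_bounded_part by blast
    then have "(b * b) * (b * b) \<le> (\<mu> * \<mu>) *\<^sub>R (b * b)"
      using f_algebra_fourth_power_le[OF F \<open>0 \<le> b\<close>] by simp
    with \<open>0 < \<mu>\<close> show ?thesis
      unfolding unfold_bounded_part by (intro exI[of _ "\<mu> * \<mu>"]) simp
  qed
  show "b \<in> bounded_part" if bounded: "b * b \<in> bounded_part"
  proof -
    obtain \<nu> :: real where "0 < \<nu>" and "(b * b) * (b * b) \<le> \<nu> *\<^sub>R (b * b)"
      using bounded unfolding unfold_bounded_part by blast
    moreover have "sqrt \<nu> * sqrt \<nu> = \<nu>"
      using \<open>0 < \<nu>\<close> by simp
    ultimately have "b * b \<le> sqrt \<nu> *\<^sub>R b"
      using f_algebra_semiprime_square_le_if_fourth_power_le[OF F S \<open>0 \<le> b\<close>, of "sqrt \<nu>"]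
      by simp
    with \<open>0 < \<nu>\<close> show ?thesis
      unfolding unfold_bounded_part by (intro exI[of _ "sqrt \<nu>"]) simp
  qed
qed

theorem lemma7:
  fixes a :: "'a::{real_algebra, ordered_real_vector, lattice}"
  assumes "f_algebra TYPE('a)"
    and "archimedean_vl TYPE('a)"
    and "semiprime TYPE('a)"
  shows "a \<in> bounded_part \<longleftrightarrow> a * a \<in> bounded_part"
proof -
  have "a \<in> bounded_part \<longleftrightarrow> vabs a \<in> bounded_part"
    by (rule bounded_part_iff_vabs[OF assms(1)])
  also have "\<dots> \<longleftrightarrow> vabs a * vabs a \<in> bounded_part"
    by (rule nonneg_in_bounded_part_iff_square[OF assms(1,3) vector_lattice.abs_ge_zero])
  also have "vabs a * vabs a = a * a"
    by (rule f_algebra_mult_vabs_vabs[OF assms(1)])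
  finally show ?thesis .
qed

end
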